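(* Let $N_1, N_2$ be positive integers and consider the Markov chain $(Z^{(t)})_{t\ge 0}$ on $[0,1]$ defined by $Z^{(t)} = B_1^{(t)} (1 - B_2^{(t)}) Z^{(t-1)} + B_2^{(t)}$ for $t \geq 1$, where $B_1^{(t)} \sim \operatorname{Beta}(N_1,1)$ and $B_2^{(t)}\sim\operatorname{Beta}(1,N_2)$, $t=1,2,\dots$, are all mutually independent and independent of $Z^{(0)}$. Let $P$ be its transition kernel and let $\pi = \operatorname{Beta}(N_1+1, N_2)$ (the stationary distribution of $P$). Then for every $z \in [0,1]$ and every integer $t \ge 0$, \[ \lvert\mathbb E Z - z \rvert \leq \mathcal W_1 (P^t(z, \cdot), \pi)\bigg/ \bigg(\frac{N_1}{N_1 + 1} \cdot \frac{N_2}{N_2 + 1}\bigg)^t \leq \mathbb E\lvert Z - z \rvert, \] where $Z\sim \operatorname{Beta}(N_1 + 1, N_2)$.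
   Context: $\operatorname{Beta}(a,b)$ denotes the Beta distribution on $[0,1]$ with density proportional to $x^{a-1}(1-x)^{b-1}$. $\mathcal W_1$ denotes the Wasserstein-1 distance between probability measures on $[0,1]$ (with the usual metric $|x-y|$). $P^t(z,\cdot)$ is the law of $Z^{(t)}$ when $Z^{(0)} = z$. *)

theory Defs
  imports "HOL-Probability.Probability"
begin

definition beta_density :: "real \<Rightarrow> real \<Rightarrow> real \<Rightarrow> real" where
  "beta_density a b x =
     indicator {0<..<1} x * x powr (a - 1) * (1 - x) powr (b - 1) / Beta a b"

definition beta_measure :: "real \<Rightarrow> real \<Rightarrow> real measure" where
  "beta_measure a b = density lborel (\<lambda>x. ennreal (beta_density a b x))"

definition chain_step :: "nat \<Rightarrow> nat \<Rightarrow> real \<Rightarrow> real measure" where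
  "chain_step N1 N2 z =
     distr (beta_measure (real N1) 1 \<Otimes>\<^sub>M beta_measure 1 (real N2)) lborel
           (\<lambda>(b1, b2). b1 * (1 - b2) * z + b2)"

fun chain_kernel :: "nat \<Rightarrow> nat \<Rightarrow> nat \<Rightarrow> real \<Rightarrow> real measure" where
  "chain_kernel N1 N2 0 z = return lborel z"
| "chain_kernel N1 N2 (Suc t) z = chain_kernel N1 N2 t z \<bind> chain_step N1 N2"

definition couplings :: "real measure \<Rightarrow> real measure \<Rightarrow> (real \<times> real) measure set" where
  "couplings \<mu> \<nu> = {\<gamma>. sets \<gamma> = sets (borel \<Otimes>\<^sub>M borel) \<and> prob_space \<gamma> \<and>
       distr \<gamma> borel fst = distr \<mu> borel (\<lambda>x. x) \<and> distr \<gamma> borel snd = distr \<nu> borel (\<lambda>x. x)}"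

definition wasserstein1 :: "real measure \<Rightarrow> real measure \<Rightarrow> ennreal" where
  "wasserstein1 \<mu> \<nu> = (INF \<gamma> \<in> couplings \<mu> \<nu>. \<integral>\<^sup>+ p. ennreal \<bar>fst p - snd p\<bar> \<partial>\<gamma>)"

end

theory Submission
  imports Defs
begin

(* Write one step as Z' = A Z + C with A = B1 (1 - B2) and C = B2.  Driving two copies of the
   chain by the same noise (synchronous coupling) multiplies their distance by A, so starting the
   second copy in the stationary law pi gives W1(P^t(z,.), pi) <= rho^t E|Z - z| with
   rho = E A = N1/(N1+1) * N2/(N2+1).  Conversely W1 dominates the difference of the means, and
   the means obey the affine recursion m' = rho m + E C, whose fixed point is E Z; hence that
   difference is exactly rho^t |E Z - z|.  Stationarity of Beta(N1+1, N2) follows from the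
   product rule Beta(a,1) * Beta(a+1,b) = Beta(a,b+1) for independent factors, applied twice
   with the reflection x -> 1 - x in between. *)

lemma mean_diff_le_wasserstein1:
  fixes \<mu> \<nu> :: "real measure"
  assumes sets_\<mu>: "sets \<mu> = sets borel" and sets_\<nu>: "sets \<nu> = sets borel"
    and int_\<mu>: "integrable \<mu> (\<lambda>x. x)" and int_\<nu>: "integrable \<nu> (\<lambda>x. x)"
  shows "ennreal \<bar>(\<integral>x. x \<partial>\<mu>) - (\<integral>x. x \<partial>\<nu>)\<bar> \<le> wasserstein1 \<mu> \<nu>"
  unfolding wasserstein1_def
proof (rule INF_greatest)
  fix \<gamma> assume \<gamma>: "\<gamma> \<in> couplings \<mu> \<nu>"
  have fst_\<gamma>: "distr \<gamma> borel fst = \<mu>" and snd_\<gamma>: "distr \<gamma> borel snd = \<nu>"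
    using \<gamma> distr_id2[of borel \<mu>] distr_id2[of borel \<nu>] sets_\<mu> sets_\<nu> unfolding couplings_def by auto
  have meas: "fst \<in> \<gamma> \<rightarrow>\<^sub>M borel" "snd \<in> \<gamma> \<rightarrow>\<^sub>M borel"
    using \<gamma> unfolding couplings_def by (auto simp: measurable_cong_sets[of \<gamma> "borel \<Otimes>\<^sub>M borel"])
  have int_fst: "integrable \<gamma> fst" and int_snd: "integrable \<gamma> snd"
    using int_\<mu> int_\<nu>
    unfolding fst_\<gamma>[symmetric] snd_\<gamma>[symmetric]
      integrable_distr_eq[OF meas(1) measurable_ident_sets[OF refl]]
      integrable_distr_eq[OF meas(2) measurable_ident_sets[OF refl]] .
  have "(\<integral>x. x \<partial>\<mu>) = (\<integral>p. fst p \<partial>\<gamma>)" "(\<integral>x. x \<partial>\<nu>) = (\<integral>p. snd p \<partial>\<gamma>)"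
    using integral_distr[OF meas(1), of "\<lambda>x. x"] integral_distr[OF meas(2), of "\<lambda>x. x"]
    by (simp_all add: fst_\<gamma> snd_\<gamma>)
  then have "\<bar>(\<integral>x. x \<partial>\<mu>) - (\<integral>x. x \<partial>\<nu>)\<bar> = \<bar>\<integral>p. fst p - snd p \<partial>\<gamma>\<bar>"
    using int_fst int_snd by simp
  also have "\<dots> \<le> (\<integral>p. \<bar>fst p - snd p\<bar> \<partial>\<gamma>)"
    by (rule integral_abs_bound)
  finally have "ennreal \<bar>(\<integral>x. x \<partial>\<mu>) - (\<integral>x. x \<partial>\<nu>)\<bar> \<le> ennreal (\<integral>p. \<bar>fst p - snd p\<bar> \<partial>\<gamma>)"
    by (rule ennreal_leI)
  also have "\<dots> = (\<integral>\<^sup>+ p. ennreal \<bar>fst p - snd p\<bar> \<partial>\<gamma>)"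
    using int_fst int_snd by (intro nn_integral_eq_integral[symmetric]) auto
  finally show "ennreal \<bar>(\<integral>x. x \<partial>\<mu>) - (\<integral>x. x \<partial>\<nu>)\<bar> \<le> (\<integral>\<^sup>+ p. ennreal \<bar>fst p - snd p\<bar> \<partial>\<gamma>)" .
qed

lemma funpow_bind_in_prob_algebra:
  assumes "M \<in> space (prob_algebra X)" and "K \<in> X \<rightarrow>\<^sub>M prob_algebra X"
  shows "((\<lambda>M. M \<bind> K) ^^ t) M \<in> space (prob_algebra X)"
  by (induction t) (use assms in \<open>auto simp: space_prob_algebra sets_bind' prob_space_bind'\<close>)

lemma distr_bind_intertwining:
  assumes M: "M \<in> space (prob_algebra X)" and K: "K \<in> X \<rightarrow>\<^sub>M prob_algebra X"
    and L: "L \<in> Y \<rightarrow>\<^sub>M prob_algebra Y" and f[measurable]: "f \<in> X \<rightarrow>\<^sub>M Y"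
    and intertwining: "\<And>x. x \<in> space X \<Longrightarrow> distr (K x) Y f = L (f x)"
  shows "distr (M \<bind> K) Y f = distr M Y f \<bind> L"
proof -
  have sets_M[measurable_cong]: "sets M = sets X" and "space M \<noteq> {}"
    using M prob_space.not_empty by (auto simp: space_prob_algebra)
  have K_M: "K \<in> M \<rightarrow>\<^sub>M subprob_algebra X"
    using measurable_prob_algebraD[OF K] by (simp add: measurable_cong_sets[OF sets_M refl])
  have "distr (M \<bind> K) Y f = M \<bind> (\<lambda>x. distr (K x) Y f)"
    using distr_bind[OF K_M \<open>space M \<noteq> {}\<close> f] .
  also have "\<dots> = M \<bind> (\<lambda>x. L (f x))"
    using intertwining sets_eq_imp_space_eq[OF sets_M] by (intro bind_cong) auto
  also have "\<dots> = distr M Y f \<bind> L"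
    using measurable_prob_algebraD[OF L] \<open>space M \<noteq> {}\<close> by (intro bind_distr[symmetric]) auto
  finally show ?thesis .
qed

lemma distr_funpow_bind_intertwining:
  assumes M: "M \<in> space (prob_algebra X)" and K: "K \<in> X \<rightarrow>\<^sub>M prob_algebra X"
    and L: "L \<in> Y \<rightarrow>\<^sub>M prob_algebra Y" and f: "f \<in> X \<rightarrow>\<^sub>M Y"
    and intertwining: "\<And>x. x \<in> space X \<Longrightarrow> distr (K x) Y f = L (f x)"
  shows "distr (((\<lambda>M. M \<bind> K) ^^ t) M) Y f = ((\<lambda>M. M \<bind> L) ^^ t) (distr M Y f)"
proof (induction t)
  case (Suc t)
  show ?case
    using distr_bind_intertwining[OF funpow_bind_in_prob_algebra[OF M K] K L f intertwining] Suc
    by simp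
qed simp

lemma integrable_ident_unit_interval:
  fixes M :: "real measure"
  assumes "finite_measure M" and "sets M = sets borel" and "AE x in M. x \<in> {0..1}"
  shows "integrable M (\<lambda>x. x)"
proof (rule finite_measure.integrable_const_bound[OF assms(1), where B=1])
  show "AE x in M. norm x \<le> 1"
    using assms(3) by (rule eventually_mono) auto
qed (rule measurable_ident_sets[OF assms(2)])

locale random_affine_map = prob_space Q for Q :: "'b measure" +
  fixes A C :: "'b \<Rightarrow> real"
  assumes measurable_A [measurable]: "A \<in> borel_measurable Q"
    and measurable_C [measurable]: "C \<in> borel_measurable Q"
    and AE_coefficients: "AE b in Q. 0 \<le> A b \<and> 0 \<le> C b \<and> A b + C b \<le> 1"
begin

definition step :: "real \<Rightarrow> real measure" where
  "step x = distr Q borel (\<lambda>b. A b * x + C b)"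

definition coupled_step :: "real \<times> real \<Rightarrow> (real \<times> real) measure" where
  "coupled_step p = distr Q (borel \<Otimes>\<^sub>M borel) (\<lambda>b. (A b * fst p + C b, A b * snd p + C b))"

definition mean_slope :: real where
  "mean_slope = (\<integral>b. A b \<partial>Q)"

definition mean_offset :: real where
  "mean_offset = (\<integral>b. C b \<partial>Q)"

lemma integrable_A: "integrable Q A" and integrable_C: "integrable Q C"
  by (rule integrable_const_bound[where B=1], rule eventually_mono[OF AE_coefficients], auto)+

lemma mean_slope_nonneg: "0 \<le> mean_slope"
  unfolding mean_slope_def using AE_coefficients
  by (intro integral_nonneg_AE) (auto elim: eventually_mono)

lemma mean_offset_nonneg: "0 \<le> mean_offset"
  unfolding mean_offset_def using AE_coefficients
  by (intro integral_nonneg_AE) (auto elim: eventually_mono)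

lemma Q_in_prob_algebra: "Q \<in> space (prob_algebra Q)"
  by (simp add: space_prob_algebra prob_space_axioms)

lemma measurable_step: "step \<in> borel \<rightarrow>\<^sub>M prob_algebra borel"
  unfolding step_def[abs_def]
  by (rule measurable_distr_prob_space2[OF measurable_const[OF Q_in_prob_algebra]]) measurable

lemma measurable_coupled_step: "coupled_step \<in> borel \<Otimes>\<^sub>M borel \<rightarrow>\<^sub>M prob_algebra (borel \<Otimes>\<^sub>M borel)"
  unfolding coupled_step_def[abs_def]
  by (rule measurable_distr_prob_space2[OF measurable_const[OF Q_in_prob_algebra]]) measurable

lemma distr_coupled_step_fst: "distr (coupled_step p) borel fst = step (fst p)"
  and distr_coupled_step_snd: "distr (coupled_step p) borel snd = step (snd p)"
  unfolding coupled_step_def step_def by (subst distr_distr; simp add: comp_def)+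

lemma AE_step_unit_interval:
  assumes "x \<in> {0..1}"
  shows "AE y in step x. y \<in> {0..1}"
  unfolding step_def
proof (subst AE_distr_iff)
  show "AE b in Q. A b * x + C b \<in> {0..1}"
    using AE_coefficients
  proof eventually_elim
    case (elim b)
    have "A b * x \<le> A b" using elim assms by (intro mult_left_le) auto
    then show ?case using elim assms by auto
  qed
qed simp_all

lemma nn_integral_step:
  assumes "0 \<le> x"
  shows "(\<integral>\<^sup>+ y. ennreal y \<partial>step x) = ennreal (mean_slope * x + mean_offset)"
proof -
  have "(\<integral>\<^sup>+ y. ennreal y \<partial>step x) = (\<integral>\<^sup>+ b. ennreal (A b * x + C b) \<partial>Q)"
    unfolding step_def by (simp add: nn_integral_distr)
  also have "\<dots> = ennreal (\<integral>b. A b * x + C b \<partial>Q)"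
    using integrable_A integrable_C
    by (intro nn_integral_eq_integral eventually_mono[OF AE_coefficients]) (auto simp: assms)
  also have "(\<integral>b. A b * x + C b \<partial>Q) = mean_slope * x + mean_offset"
    using integrable_A integrable_C by (simp add: mean_slope_def mean_offset_def)
  finally show ?thesis .
qed

lemma nn_integral_coupled_step_dist:
  "(\<integral>\<^sup>+ q. ennreal \<bar>fst q - snd q\<bar> \<partial>coupled_step p) = ennreal mean_slope * ennreal \<bar>fst p - snd p\<bar>"
proof -
  have "(\<integral>\<^sup>+ q. ennreal \<bar>fst q - snd q\<bar> \<partial>coupled_step p) = (\<integral>\<^sup>+ b. ennreal (A b * \<bar>fst p - snd p\<bar>) \<partial>Q)"
    unfolding coupled_step_def using AE_coefficients
    by (simp add: nn_integral_distr) (intro nn_integral_cong_AE, auto simp: abs_mult right_diff_distrib[symmetric] elim!: eventually_mono)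
  also have "\<dots> = ennreal (\<integral>b. A b * \<bar>fst p - snd p\<bar> \<partial>Q)"
    using AE_coefficients integrable_A
    by (intro nn_integral_eq_integral) (auto elim!: eventually_mono)
  also have "\<dots> = ennreal mean_slope * ennreal \<bar>fst p - snd p\<bar>"
    using mean_slope_nonneg by (simp add: mean_slope_def ennreal_mult)
  finally show ?thesis .
qed

lemma measurable_step_on:
  assumes "sets M = sets borel"
  shows "step \<in> M \<rightarrow>\<^sub>M subprob_algebra borel"
  unfolding measurable_cong_sets[OF assms refl] by (rule measurable_prob_algebraD[OF measurable_step])

lemma measurable_coupled_step_on:
  assumes "sets G = sets (borel \<Otimes>\<^sub>M borel)"
  shows "coupled_step \<in> G \<rightarrow>\<^sub>M subprob_algebra (borel \<Otimes>\<^sub>M borel)"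
  unfolding measurable_cong_sets[OF assms refl] by (rule measurable_prob_algebraD[OF measurable_coupled_step])

lemma AE_bind_step_unit_interval:
  assumes M: "sets M = sets borel" and M_unit: "AE x in M. x \<in> {0..1}"
  shows "AE x in M \<bind> step. x \<in> {0..1}"
proof (subst AE_bind[OF measurable_step_on[OF M]])
  show "AE x in M. AE y in step x. y \<in> {0..1}"
    using M_unit by (rule eventually_mono) (rule AE_step_unit_interval)
qed simp

lemma AE_funpow_bind_step_unit_interval:
  assumes M: "M \<in> space (prob_algebra borel)" and M_unit: "AE x in M. x \<in> {0..1}"
  shows "AE x in ((\<lambda>M. M \<bind> step) ^^ t) M. x \<in> {0..1}"
proof (induction t)
  case (Suc t)
  have "sets (((\<lambda>M. M \<bind> step) ^^ t) M) = sets borel"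
    using funpow_bind_in_prob_algebra[OF M measurable_step] by (simp add: space_prob_algebra)
  from AE_bind_step_unit_interval[OF this Suc] show ?case
    unfolding funpow.simps(2) o_apply .
qed (simp only: funpow.simps(1) id_apply M_unit)

lemma integral_bind_step:
  assumes M: "M \<in> space (prob_algebra borel)" and M_unit: "AE x in M. x \<in> {0..1}"
  shows "(\<integral>x. x \<partial>(M \<bind> step)) = mean_slope * (\<integral>x. x \<partial>M) + mean_offset"
proof -
  have sets_M: "sets M = sets borel" and "prob_space M"
    using M by (auto simp: space_prob_algebra)
  interpret M: prob_space M by fact
  interpret MK: prob_space "M \<bind> step"
    using M measurable_step by (rule prob_space_bind')
  have sets_MK: "sets (M \<bind> step) = sets borel"
    using M measurable_step by (rule sets_bind')
  note MK_unit = AE_bind_step_unit_interval[OF sets_M M_unit]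
  have int_M: "integrable M (\<lambda>x. x)"
    using M.finite_measure_axioms sets_M M_unit by (rule integrable_ident_unit_interval)
  have "ennreal (\<integral>x. x \<partial>(M \<bind> step)) = (\<integral>\<^sup>+ x. ennreal x \<partial>(M \<bind> step))"
    using integrable_ident_unit_interval[OF MK.finite_measure_axioms sets_MK MK_unit]
    by (rule nn_integral_eq_integral[symmetric]) (rule eventually_mono[OF MK_unit], simp)
  also have "\<dots> = (\<integral>\<^sup>+ y. \<integral>\<^sup>+ x. ennreal x \<partial>step y \<partial>M)"
    by (rule nn_integral_bind[OF _ measurable_step_on[OF sets_M]]) simp
  also have "\<dots> = (\<integral>\<^sup>+ y. ennreal (mean_slope * y + mean_offset) \<partial>M)"
    by (rule nn_integral_cong_AE, rule eventually_mono[OF M_unit]) (simp add: nn_integral_step)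
  also have "\<dots> = ennreal (\<integral>y. mean_slope * y + mean_offset \<partial>M)"
    using int_M mean_slope_nonneg mean_offset_nonneg
    by (intro nn_integral_eq_integral eventually_mono[OF M_unit]) auto
  also have "(\<integral>y. mean_slope * y + mean_offset \<partial>M) = mean_slope * (\<integral>x. x \<partial>M) + mean_offset"
    using int_M by (simp add: M.prob_space)
  finally have "ennreal (\<integral>x. x \<partial>(M \<bind> step)) = ennreal (mean_slope * (\<integral>x. x \<partial>M) + mean_offset)" .
  moreover have "0 \<le> (\<integral>x. x \<partial>M)" "0 \<le> (\<integral>x. x \<partial>(M \<bind> step))"
    by (intro integral_nonneg_AE eventually_mono[OF M_unit] eventually_mono[OF MK_unit]; simp)+
  ultimately show ?thesis
    using mean_slope_nonneg mean_offset_nonneg by (subst (asm) ennreal_inj) auto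
qed

lemma integral_funpow_bind_step:
  assumes M: "M \<in> space (prob_algebra borel)" and M_unit: "AE x in M. x \<in> {0..1}"
    and fixed_point: "m = mean_slope * m + mean_offset"
  shows "(\<integral>x. x \<partial>((\<lambda>M. M \<bind> step) ^^ t) M) - m = mean_slope ^ t * ((\<integral>x. x \<partial>M) - m)"
proof (induction t)
  case (Suc t)
  have "(\<integral>x. x \<partial>((\<lambda>M. M \<bind> step) ^^ Suc t) M) - m
      = mean_slope * ((\<integral>x. x \<partial>((\<lambda>M. M \<bind> step) ^^ t) M) - m)"
    using integral_bind_step[OF funpow_bind_in_prob_algebra[OF M measurable_step]
        AE_funpow_bind_step_unit_interval[OF M M_unit]] fixed_point
    by (simp add: algebra_simps)
  then show ?case using Suc by simp
qed simp

lemma nn_integral_funpow_bind_coupled_step_dist: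
  assumes G: "G \<in> space (prob_algebra (borel \<Otimes>\<^sub>M borel))"
  shows "(\<integral>\<^sup>+ q. ennreal \<bar>fst q - snd q\<bar> \<partial>((\<lambda>G. G \<bind> coupled_step) ^^ t) G)
       = ennreal mean_slope ^ t * (\<integral>\<^sup>+ q. ennreal \<bar>fst q - snd q\<bar> \<partial>G)"
proof (induction t)
  case (Suc t)
  let ?G = "((\<lambda>G. G \<bind> coupled_step) ^^ t) G"
  have sets_G: "sets ?G = sets (borel \<Otimes>\<^sub>M borel)"
    using funpow_bind_in_prob_algebra[OF G measurable_coupled_step] by (simp add: space_prob_algebra)
  have "(\<integral>\<^sup>+ q. ennreal \<bar>fst q - snd q\<bar> \<partial>(?G \<bind> coupled_step))
      = (\<integral>\<^sup>+ p. ennreal mean_slope * ennreal \<bar>fst p - snd p\<bar> \<partial>?G)"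
    by (simp add: nn_integral_bind[OF _ measurable_coupled_step_on[OF sets_G]] nn_integral_coupled_step_dist)
  also have "\<dots> = ennreal mean_slope * (\<integral>\<^sup>+ p. ennreal \<bar>fst p - snd p\<bar> \<partial>?G)"
    using sets_G by (intro nn_integral_cmult) simp
  finally show ?case using Suc by (simp add: mult.assoc)
qed simp

lemma synchronous_coupling_in_couplings:
  assumes \<pi>: "\<pi> \<in> space (prob_algebra borel)" and stationary: "\<pi> \<bind> step = \<pi>"
  shows "((\<lambda>G. G \<bind> coupled_step) ^^ t) (distr \<pi> (borel \<Otimes>\<^sub>M borel) (\<lambda>y. (z, y)))
           \<in> couplings (((\<lambda>M. M \<bind> step) ^^ t) (return borel z)) \<pi>"
proof -
  have sets_\<pi>[measurable_cong]: "sets \<pi> = sets borel" and "prob_space \<pi>"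
    using \<pi> by (auto simp: space_prob_algebra)
  define G where "G = distr \<pi> (borel \<Otimes>\<^sub>M borel) (\<lambda>y. (z, y))"
  have G: "G \<in> space (prob_algebra (borel \<Otimes>\<^sub>M borel))"
    unfolding G_def using \<open>prob_space \<pi>\<close>
    by (auto simp: space_prob_algebra intro!: prob_space.prob_space_distr)
  have G_fst: "distr G borel fst = return borel z"
    unfolding G_def using \<open>prob_space \<pi>\<close> by (simp add: distr_distr comp_def prob_space.distr_const)
  have G_snd: "distr G borel snd = \<pi>"
    unfolding G_def by (simp add: distr_distr comp_def distr_id2 sets_\<pi>)
  have "distr (((\<lambda>G. G \<bind> coupled_step) ^^ t) G) borel fst = ((\<lambda>M. M \<bind> step) ^^ t) (return borel z)"
    unfolding G_fst[symmetric] using distr_coupled_step_fst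
    by (intro distr_funpow_bind_intertwining[OF G measurable_coupled_step measurable_step]) auto
  moreover have "distr (((\<lambda>G. G \<bind> coupled_step) ^^ t) G) borel snd = ((\<lambda>M. M \<bind> step) ^^ t) \<pi>"
    unfolding G_snd[symmetric] using distr_coupled_step_snd
    by (intro distr_funpow_bind_intertwining[OF G measurable_coupled_step measurable_step]) auto
  moreover have "((\<lambda>M. M \<bind> step) ^^ t) \<pi> = \<pi>"
    using stationary by (induction t) simp_all
  moreover have "sets (((\<lambda>M. M \<bind> step) ^^ t) (return borel z)) = sets borel"
    using funpow_bind_in_prob_algebra[OF _ measurable_step, of "return borel z"]
    by (simp add: space_prob_algebra prob_space_return)
  ultimately show ?thesis
    using funpow_bind_in_prob_algebra[OF G measurable_coupled_step, of t]
    by (simp add: couplings_def space_prob_algebra distr_id2 sets_\<pi> G_def)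
qed

lemma wasserstein1_funpow_bind_step_le:
  assumes \<pi>: "\<pi> \<in> space (prob_algebra borel)" and stationary: "\<pi> \<bind> step = \<pi>"
  shows "wasserstein1 (((\<lambda>M. M \<bind> step) ^^ t) (return borel z)) \<pi>
           \<le> ennreal mean_slope ^ t * (\<integral>\<^sup>+ y. ennreal \<bar>z - y\<bar> \<partial>\<pi>)"
proof -
  have "prob_space \<pi>" and [measurable_cong]: "sets \<pi> = sets borel"
    using \<pi> by (auto simp: space_prob_algebra)
  then have G: "distr \<pi> (borel \<Otimes>\<^sub>M borel) (\<lambda>y. (z, y)) \<in> space (prob_algebra (borel \<Otimes>\<^sub>M borel))"
    by (auto simp: space_prob_algebra intro!: prob_space.prob_space_distr)
  have "wasserstein1 (((\<lambda>M. M \<bind> step) ^^ t) (return borel z)) \<pi>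
      \<le> (\<integral>\<^sup>+ q. ennreal \<bar>fst q - snd q\<bar> \<partial>((\<lambda>G. G \<bind> coupled_step) ^^ t) (distr \<pi> (borel \<Otimes>\<^sub>M borel) (\<lambda>y. (z, y))))"
    unfolding wasserstein1_def by (rule INF_lower[OF synchronous_coupling_in_couplings[OF \<pi> stationary]])
  also have "\<dots> = ennreal mean_slope ^ t * (\<integral>\<^sup>+ y. ennreal \<bar>z - y\<bar> \<partial>\<pi>)"
    by (simp add: nn_integral_funpow_bind_coupled_step_dist[OF G] nn_integral_distr)
  finally show ?thesis .
qed

lemma mean_dist_le_wasserstein1_funpow_bind_step:
  assumes \<pi>: "\<pi> \<in> space (prob_algebra borel)" and \<pi>_unit: "AE x in \<pi>. x \<in> {0..1}"
    and stationary: "\<pi> \<bind> step = \<pi>" and z: "z \<in> {0..1}"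
  shows "ennreal (mean_slope ^ t * \<bar>(\<integral>x. x \<partial>\<pi>) - z\<bar>)
           \<le> wasserstein1 (((\<lambda>M. M \<bind> step) ^^ t) (return borel z)) \<pi>"
proof -
  define m where "m = (\<integral>x. x \<partial>\<pi>)"
  define \<mu> where "\<mu> = ((\<lambda>M. M \<bind> step) ^^ t) (return borel z)"
  have \<delta>: "return borel z \<in> space (prob_algebra borel)"
    by (simp add: space_prob_algebra prob_space_return)
  have \<delta>_unit: "AE x in return borel z. x \<in> {0..1}"
    using z by (simp add: AE_return)
  have \<mu>: "\<mu> \<in> space (prob_algebra borel)"
    unfolding \<mu>_def using \<delta> measurable_step by (rule funpow_bind_in_prob_algebra)
  have \<mu>_unit: "AE x in \<mu>. x \<in> {0..1}"
    unfolding \<mu>_def using \<delta> \<delta>_unit by (rule AE_funpow_bind_step_unit_interval)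
  have "m = mean_slope * m + mean_offset"
    using integral_bind_step[OF \<pi> \<pi>_unit] by (simp add: stationary m_def)
  then have "(\<integral>x. x \<partial>\<mu>) - m = mean_slope ^ t * (z - m)"
    unfolding \<mu>_def using integral_funpow_bind_step[OF \<delta> \<delta>_unit] by (simp add: integral_return)
  then have "mean_slope ^ t * \<bar>m - z\<bar> = \<bar>(\<integral>x. x \<partial>\<mu>) - m\<bar>"
    using mean_slope_nonneg by (simp add: abs_mult abs_minus_commute)
  also have "ennreal \<dots> \<le> wasserstein1 \<mu> \<pi>"
    unfolding m_def using \<mu> \<pi> \<mu>_unit \<pi>_unit
    by (intro mean_diff_le_wasserstein1 integrable_ident_unit_interval)
       (auto simp: space_prob_algebra intro: prob_space.finite_measure)
  finally show ?thesis unfolding m_def \<mu>_def .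
qed

lemma wasserstein1_funpow_bind_step_bounds:
  fixes t :: nat
  assumes \<pi>: "\<pi> \<in> space (prob_algebra borel)" and \<pi>_unit: "AE x in \<pi>. x \<in> {0..1}"
    and stationary: "\<pi> \<bind> step = \<pi>" and z: "z \<in> {0..1}"
  defines "W \<equiv> enn2real (wasserstein1 (((\<lambda>M. M \<bind> step) ^^ t) (return borel z)) \<pi>)"
  shows "mean_slope ^ t * \<bar>(\<integral>x. x \<partial>\<pi>) - z\<bar> \<le> W"
    and "W \<le> mean_slope ^ t * (\<integral>x. \<bar>x - z\<bar> \<partial>\<pi>)"
proof -
  interpret \<pi>: prob_space \<pi>
    using \<pi> by (simp add: space_prob_algebra)
  have "AE x in \<pi>. norm \<bar>x - z\<bar> \<le> 1"
    using \<pi>_unit by (rule eventually_mono) (use z in auto)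
  then have "integrable \<pi> (\<lambda>x. \<bar>x - z\<bar>)"
    using \<pi> by (intro \<pi>.integrable_const_bound) (auto simp: space_prob_algebra)
  then have "(\<integral>\<^sup>+ y. ennreal \<bar>z - y\<bar> \<partial>\<pi>) = ennreal (\<integral>x. \<bar>x - z\<bar> \<partial>\<pi>)"
    by (simp add: abs_minus_commute nn_integral_eq_integral)
  then have upper: "wasserstein1 (((\<lambda>M. M \<bind> step) ^^ t) (return borel z)) \<pi>
      \<le> ennreal (mean_slope ^ t * (\<integral>x. \<bar>x - z\<bar> \<partial>\<pi>))"
    using wasserstein1_funpow_bind_step_le[OF \<pi> stationary, of t z] mean_slope_nonneg
    by (simp add: ennreal_mult ennreal_power)
  then show "W \<le> mean_slope ^ t * (\<integral>x. \<bar>x - z\<bar> \<partial>\<pi>)"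
    unfolding W_def using mean_slope_nonneg by (simp add: enn2real_leI)
  have "wasserstein1 (((\<lambda>M. M \<bind> step) ^^ t) (return borel z)) \<pi> < top"
    using upper by (rule le_less_trans) simp
  with mean_dist_le_wasserstein1_funpow_bind_step[OF \<pi> \<pi>_unit stationary z, of t]
  have "enn2real (ennreal (mean_slope ^ t * \<bar>(\<integral>x. x \<partial>\<pi>) - z\<bar>)) \<le> W"
    unfolding W_def by (rule enn2real_mono)
  then show "mean_slope ^ t * \<bar>(\<integral>x. x \<partial>\<pi>) - z\<bar> \<le> W"
    using mean_slope_nonneg by simp
qed

end

lemma Beta_real_pos: "0 < a \<Longrightarrow> 0 < b \<Longrightarrow> 0 < Beta a (b::real)"
  unfolding Beta_def by (intro divide_pos_pos mult_pos_pos Gamma_real_pos) auto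

lemma Beta_right_1:
  fixes a :: real
  assumes "0 < a"
  shows "Beta a 1 = 1 / a"
proof -
  have "a \<notin> \<int>\<^sub>\<le>\<^sub>0" using assms by auto
  then show ?thesis using Gamma_real_pos[OF assms] by (simp add: Beta_def Gamma_plus1)
qed

lemma Beta_plus1_exchange:
  fixes a b :: real
  assumes "0 < a" and "0 < b"
  shows "a * Beta a (b + 1) = b * Beta (a + 1) b"
proof -
  have "a \<notin> \<int>\<^sub>\<le>\<^sub>0" "b \<notin> \<int>\<^sub>\<le>\<^sub>0" using assms by auto
  then have left: "(a + b) * Beta (a + 1) b = a * Beta a b"
    and right: "(a + b) * Beta a (b + 1) = b * Beta a b"
    by (simp_all add: Beta_plus1_left Beta_plus1_right)
  have "(a + b) * (a * Beta a (b + 1)) = a * (b * Beta a b)"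
    using right by (metis mult.left_commute)
  also have "\<dots> = (a + b) * (b * Beta (a + 1) b)"
    using left by (metis mult.left_commute)
  finally show ?thesis using assms by simp
qed

lemma beta_density_nonneg: "0 < a \<Longrightarrow> 0 < b \<Longrightarrow> 0 \<le> beta_density a b x"
  unfolding beta_density_def using Beta_real_pos[of a b] by (auto simp: indicator_def)

lemma beta_density_reflect: "beta_density a b (1 - x) = beta_density b a x"
proof -
  have "indicator {0<..<1} (1 - x) = (indicator {0<..<1} x :: real)"
    by (auto simp: indicator_def)
  then show ?thesis by (simp add: beta_density_def Beta_commute mult.commute)
qed

lemma measurable_beta_density [measurable]: "beta_density a b \<in> borel_measurable borel"
  unfolding beta_density_def[abs_def] by measurable

lemma sets_beta_measure [simp, measurable_cong]: "sets (beta_measure a b) = sets borel"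
  by (simp add: beta_measure_def)

lemma space_beta_measure [simp]: "space (beta_measure a b) = UNIV"
  by (simp add: beta_measure_def)

lemma nn_integral_beta_measure:
  "f \<in> borel_measurable borel \<Longrightarrow>
     (\<integral>\<^sup>+ x. f x \<partial>beta_measure a b) = (\<integral>\<^sup>+ x. ennreal (beta_density a b x) * f x \<partial>lborel)"
  unfolding beta_measure_def by (simp add: nn_integral_density)

lemma AE_beta_measure: "AE x in beta_measure a b. x \<in> {0<..<1}"
  unfolding beta_measure_def
  by (subst AE_density) (auto simp: beta_density_def split: split_indicator)

lemma prob_space_beta_measure:
  assumes a: "0 < a" and b: "0 < b"
  shows "prob_space (beta_measure a b)"
proof
  have "((\<lambda>x. x powr (a - 1) * (1 - x) powr (b - 1) / Beta a b) has_integral 1) {0<..<1}"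
    using has_integral_divide[OF has_integral_Beta_real[OF a b], of "Beta a b"] Beta_real_pos[OF a b]
    by (simp add: has_integral_Icc_iff_Ioo)
  moreover have "beta_density a b =
      (\<lambda>x. if x \<in> {0<..<1} then x powr (a - 1) * (1 - x) powr (b - 1) / Beta a b else 0)"
    by (auto simp: beta_density_def fun_eq_iff)
  ultimately have "(beta_density a b has_integral 1) UNIV"
    by (simp only: has_integral_restrict_UNIV)
  then have "(\<integral>\<^sup>+ x. ennreal (beta_density a b x) \<partial>lborel) = ennreal 1"
    by (intro nn_integral_has_integral_lborel) (auto intro: beta_density_nonneg a b)
  then show "emeasure (beta_measure a b) (space (beta_measure a b)) = 1"
    by (simp add: beta_measure_def emeasure_density)
qed

lemma beta_measure_in_prob_algebra:
  "0 < a \<Longrightarrow> 0 < b \<Longrightarrow> beta_measure a b \<in> space (prob_algebra borel)"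
  by (simp add: space_prob_algebra prob_space_beta_measure)

lemma nn_integral_beta_measure_reflect:
  assumes [measurable]: "g \<in> borel_measurable borel"
  shows "(\<integral>\<^sup>+ x. g x \<partial>beta_measure a b) = (\<integral>\<^sup>+ x. g (1 - x) \<partial>beta_measure b a)"
  using nn_integral_real_affine[of "\<lambda>x. ennreal (beta_density a b x) * g x" "-1" 1]
  by (simp add: nn_integral_beta_measure beta_density_reflect)

lemma nn_integral_beta_measure_mean:
  fixes a b :: real
  assumes a: "0 < a" and b: "0 < b"
  shows "(\<integral>\<^sup>+ x. ennreal x \<partial>beta_measure a b) = ennreal (a / (a + b))"
proof -
  have density: "beta_density a b x * x = Beta (a + 1) b / Beta a b * beta_density (a + 1) b x" for x
  proof (cases "x \<in> {0<..<1}")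
    case True
    then have "x powr a = x powr (a - 1) * x"
      using powr_add[of x "a - 1" 1] by simp
    then show ?thesis
      using True Beta_real_pos[OF a b] Beta_real_pos[of "a + 1" b] a b by (simp add: beta_density_def)
  qed (simp add: beta_density_def)
  have "ennreal (beta_density a b x) * ennreal x
      = ennreal (Beta (a + 1) b / Beta a b) * ennreal (beta_density (a + 1) b x)" for x
    using density[of x] beta_density_nonneg[OF a b, of x] Beta_real_pos[OF a b] Beta_real_pos[of "a + 1" b] a b
    by (simp flip: ennreal_mult')
  then have "(\<integral>\<^sup>+ x. ennreal x \<partial>beta_measure a b)
      = (\<integral>\<^sup>+ x. ennreal (Beta (a + 1) b / Beta a b) * ennreal (beta_density (a + 1) b x) \<partial>lborel)"
    by (simp add: nn_integral_beta_measure)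
  also have "\<dots> = ennreal (Beta (a + 1) b / Beta a b) * emeasure (beta_measure (a + 1) b) UNIV"
    by (simp add: nn_integral_cmult beta_measure_def emeasure_density)
  also have "\<dots> = ennreal (a / (a + b))"
  proof -
    have "a \<notin> \<int>\<^sub>\<le>\<^sub>0" using a by auto
    then have "Beta (a + 1) b / Beta a b = a / (a + b)"
      using Beta_plus1_left[of a b] Beta_real_pos[OF a b] a b by (simp add: field_simps)
    then show ?thesis
      using prob_space.emeasure_space_1[OF prob_space_beta_measure[of "a + 1" b]] a b by simp
  qed
  finally show ?thesis .
qed

lemma nn_integral_one_minus_powr_tail:
  fixes b w :: real
  assumes b: "0 < b" and w: "w \<le> 1"
  shows "(\<integral>\<^sup>+ y. ennreal (indicator {w<..<1} y * (1 - y) powr (b - 1)) \<partial>lborel) = ennreal ((1 - w) powr b / b)"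
proof -
  have "((\<lambda>x. x powr (b - 1)) has_integral ((1 - w) powr b / b)) {0<..<1 - w}"
    using has_integral_powr_from_0[of "b - 1" "1 - w"] b w by (simp add: has_integral_Icc_iff_Ioo)
  moreover have "(\<lambda>x. indicator {0<..<1 - w} x * x powr (b - 1))
      = (\<lambda>x. if x \<in> {0<..<1 - w} then x powr (b - 1) else 0)"
    by (auto simp: fun_eq_iff)
  ultimately have "((\<lambda>x. indicator {0<..<1 - w} x * x powr (b - 1)) has_integral ((1 - w) powr b / b)) UNIV"
    by (simp only: has_integral_restrict_UNIV)
  then have "(\<integral>\<^sup>+ x. ennreal (indicator {0<..<1 - w} x * x powr (b - 1)) \<partial>lborel) = ennreal ((1 - w) powr b / b)"
    by (intro nn_integral_has_integral_lborel) (auto simp: indicator_def)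
  moreover have "indicator {w<..<1} (1 - x) = (indicator {0<..<1 - w} x :: real)" for x
    by (auto simp: indicator_def)
  ultimately show ?thesis
    using nn_integral_real_affine[of "\<lambda>y. ennreal (indicator {w<..<1} y * (1 - y) powr (b - 1))" "-1" 1]
    by simp
qed

lemma beta_density_product_kernel:
  fixes a b w :: real
  assumes a: "0 < a" and b: "0 < b"
  shows "(\<integral>\<^sup>+ y. ennreal (beta_density (a + 1) b y * beta_density a 1 (w / y) / y) \<partial>lborel)
       = ennreal (beta_density a (b + 1) w)"
proof (cases "w \<in> {0<..<1}")
  case True
  define c where "c = a * w powr (a - 1) / Beta (a + 1) b"
  have c: "0 \<le> c"
    using a Beta_real_pos[of "a + 1" b] b by (simp add: c_def)
  have kernel: "beta_density (a + 1) b y * beta_density a 1 (w / y) / y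
      = c * (indicator {w<..<1} y * (1 - y) powr (b - 1))" for y
  proof (cases "y \<in> {w<..<1}")
    case in_tail: True
    then have y: "0 < y" "y < 1" and wy: "0 < w / y" "w / y < 1"
      using True by (auto simp: field_simps)
    have "y powr a = y powr (a - 1) * y"
      using powr_add[of y "a - 1" 1] y by simp
    moreover have "(w / y) powr (a - 1) = w powr (a - 1) / y powr (a - 1)"
      by (rule powr_divide)
    ultimately show ?thesis
      using in_tail y wy a by (simp add: beta_density_def Beta_right_1 c_def field_simps)
  next
    case False
    then have "y \<notin> {0<..<1} \<or> w / y \<notin> {0<..<1}"
      using True by (auto simp: field_simps)
    then show ?thesis
      using False by (elim disjE) (simp_all add: beta_density_def)
  qed
  have "(\<integral>\<^sup>+ y. ennreal (beta_density (a + 1) b y * beta_density a 1 (w / y) / y) \<partial>lborel)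
      = ennreal c * (\<integral>\<^sup>+ y. ennreal (indicator {w<..<1} y * (1 - y) powr (b - 1)) \<partial>lborel)"
    using c by (simp add: kernel ennreal_mult' nn_integral_cmult)
  also have "\<dots> = ennreal (c * ((1 - w) powr b / b))"
    using True b c by (simp only: nn_integral_one_minus_powr_tail ennreal_mult' less_imp_le mem_Collect_eq greaterThanLessThan_iff)
  also have "c * ((1 - w) powr b / b) = beta_density a (b + 1) w"
    using True Beta_plus1_exchange[OF a b] Beta_real_pos[of a "b + 1"] Beta_real_pos[of "a + 1" b] a b
    by (simp add: beta_density_def c_def field_simps)
  finally show ?thesis .
next
  case False
  have zero: "beta_density (a + 1) b y * beta_density a 1 (w / y) / y = 0" for y
  proof (cases "y \<in> {0<..<1}")
    case True
    then have "w / y \<notin> {0<..<1}"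
      using False by (auto simp: field_simps)
    then show ?thesis by (simp add: beta_density_def)
  qed (simp add: beta_density_def)
  moreover have "beta_density a (b + 1) w = 0"
    using False by (simp add: beta_density_def)
  ultimately show ?thesis
    by (simp only: zero ennreal_0) simp
qed

lemma nn_integral_beta_measure_product:
  fixes a b :: real
  assumes a: "0 < a" and b: "0 < b" and g[measurable]: "g \<in> borel_measurable borel"
  shows "(\<integral>\<^sup>+ y. \<integral>\<^sup>+ u. g (u * y) \<partial>beta_measure a 1 \<partial>beta_measure (a + 1) b)
       = (\<integral>\<^sup>+ w. g w \<partial>beta_measure a (b + 1))"
proof -
  define K where "K y w = beta_density (a + 1) b y * beta_density a 1 (w / y) / y" for y w
  have K_nonneg: "0 \<le> K y w" for y w
  proof (cases "0 < y")
    case False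
    then show ?thesis by (simp add: K_def beta_density_def)
  qed (use a b in \<open>simp add: K_def beta_density_nonneg\<close>)
  have substitution: "ennreal (beta_density (a + 1) b y) * (\<integral>\<^sup>+ u. ennreal (beta_density a 1 u) * g (u * y) \<partial>lborel)
      = (\<integral>\<^sup>+ w. ennreal (K y w) * g w \<partial>lborel)" for y
  proof (cases "0 < y")
    case True
    have "(\<integral>\<^sup>+ w. ennreal (K y w) * g w \<partial>lborel) = ennreal y * (\<integral>\<^sup>+ u. ennreal (K y (y * u)) * g (y * u) \<partial>lborel)"
      using nn_integral_real_affine[of "\<lambda>w. ennreal (K y w) * g w" y 0] True by (simp add: K_def)
    also have "\<dots> = (\<integral>\<^sup>+ u. ennreal y * (ennreal (K y (y * u)) * g (y * u)) \<partial>lborel)"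
      by (rule nn_integral_cmult[symmetric]) (simp add: K_def)
    also have "\<dots> = (\<integral>\<^sup>+ u. ennreal (beta_density (a + 1) b y) * (ennreal (beta_density a 1 u) * g (u * y)) \<partial>lborel)"
    proof (intro nn_integral_cong)
      fix u
      have "ennreal y * ennreal (K y (y * u)) = ennreal (y * K y (y * u))"
        using True K_nonneg by (simp add: ennreal_mult)
      also have "y * K y (y * u) = beta_density (a + 1) b y * beta_density a 1 u"
        using True by (simp add: K_def)
      also have "ennreal \<dots> = ennreal (beta_density (a + 1) b y) * ennreal (beta_density a 1 u)"
        using a b by (simp add: ennreal_mult beta_density_nonneg)
      finally have scale: "ennreal y * ennreal (K y (y * u)) = \<dots>" .
      have "ennreal y * (ennreal (K y (y * u)) * g (y * u)) = (ennreal y * ennreal (K y (y * u))) * g (u * y)"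
        by (simp add: mult.assoc mult.commute[of y u])
      then show "ennreal y * (ennreal (K y (y * u)) * g (y * u))
          = ennreal (beta_density (a + 1) b y) * (ennreal (beta_density a 1 u) * g (u * y))"
        by (simp only: scale mult.assoc)
    qed
    finally show ?thesis
      using a b by (simp add: nn_integral_cmult beta_density_nonneg)
  next
    case False
    then show ?thesis by (simp add: K_def beta_density_def)
  qed
  have "(\<integral>\<^sup>+ y. \<integral>\<^sup>+ u. g (u * y) \<partial>beta_measure a 1 \<partial>beta_measure (a + 1) b)
      = (\<integral>\<^sup>+ y. \<integral>\<^sup>+ w. ennreal (K y w) * g w \<partial>lborel \<partial>lborel)"
    by (simp add: nn_integral_beta_measure substitution)
  also have "\<dots> = (\<integral>\<^sup>+ w. \<integral>\<^sup>+ y. ennreal (K y w) * g w \<partial>lborel \<partial>lborel)"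
    by (rule lborel_pair.Fubini'[symmetric]) (simp add: K_def)
  also have "\<dots> = (\<integral>\<^sup>+ w. ennreal (beta_density a (b + 1) w) * g w \<partial>lborel)"
    by (simp add: nn_integral_multc K_def beta_density_product_kernel a b)
  also have "\<dots> = (\<integral>\<^sup>+ w. g w \<partial>beta_measure a (b + 1))"
    by (simp add: nn_integral_beta_measure)
  finally show ?thesis .
qed

(* For Z ~ Beta(a+1,b), U ~ Beta(a,1), V ~ Beta(1,b): U Z ~ Beta(a,b+1) by the product rule, and
   1 - (U (1 - V) Z + V) = (1 - V) (1 - U Z) is again a product of independent Beta(b,1) and
   Beta(b+1,a) variables, hence Beta(b,a+1). *)
lemma nn_integral_beta_measure_stationary:
  fixes a b :: real
  assumes a: "0 < a" and b: "0 < b" and g[measurable]: "g \<in> borel_measurable borel"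
  shows "(\<integral>\<^sup>+ z. \<integral>\<^sup>+ u. \<integral>\<^sup>+ v. g (u * (1 - v) * z + v) \<partial>beta_measure 1 b \<partial>beta_measure a 1 \<partial>beta_measure (a + 1) b)
       = (\<integral>\<^sup>+ x. g x \<partial>beta_measure (a + 1) b)"
proof -
  interpret U: prob_space "beta_measure a 1" using a by (simp add: prob_space_beta_measure)
  interpret V: prob_space "beta_measure 1 b" using b by (simp add: prob_space_beta_measure)
  interpret Z: prob_space "beta_measure (a + 1) b" using a b by (simp add: prob_space_beta_measure)
  interpret V': prob_space "beta_measure b 1" using b by (simp add: prob_space_beta_measure)
  interpret W: prob_space "beta_measure (b + 1) a" using a b by (simp add: prob_space_beta_measure)
  interpret UV: pair_sigma_finite "beta_measure a 1" "beta_measure 1 b" ..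
  interpret ZV: pair_sigma_finite "beta_measure (a + 1) b" "beta_measure 1 b" ..
  interpret WV: pair_sigma_finite "beta_measure (b + 1) a" "beta_measure b 1" ..
  have "(\<integral>\<^sup>+ z. \<integral>\<^sup>+ u. \<integral>\<^sup>+ v. g (u * (1 - v) * z + v) \<partial>beta_measure 1 b \<partial>beta_measure a 1 \<partial>beta_measure (a + 1) b)
      = (\<integral>\<^sup>+ z. \<integral>\<^sup>+ v. \<integral>\<^sup>+ u. g (u * (1 - v) * z + v) \<partial>beta_measure a 1 \<partial>beta_measure 1 b \<partial>beta_measure (a + 1) b)"
    by (intro nn_integral_cong UV.Fubini'[symmetric]) measurable
  also have "\<dots> = (\<integral>\<^sup>+ v. \<integral>\<^sup>+ z. \<integral>\<^sup>+ u. g (u * (1 - v) * z + v) \<partial>beta_measure a 1 \<partial>beta_measure (a + 1) b \<partial>beta_measure 1 b)"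
    by (rule ZV.Fubini'[symmetric]) measurable
  also have "\<dots> = (\<integral>\<^sup>+ v. \<integral>\<^sup>+ w. g ((1 - v) * w + v) \<partial>beta_measure a (b + 1) \<partial>beta_measure 1 b)"
  proof (rule nn_integral_cong)
    fix v :: real
    have eq: "u * (1 - v) * z + v = (1 - v) * (u * z) + v" for u z :: real
      by (simp add: algebra_simps)
    show "(\<integral>\<^sup>+ z. \<integral>\<^sup>+ u. g (u * (1 - v) * z + v) \<partial>beta_measure a 1 \<partial>beta_measure (a + 1) b)
        = (\<integral>\<^sup>+ w. g ((1 - v) * w + v) \<partial>beta_measure a (b + 1))"
      unfolding eq by (rule nn_integral_beta_measure_product[OF a b, of "\<lambda>w. g ((1 - v) * w + v)"]) measurable
  qed
  also have "\<dots> = (\<integral>\<^sup>+ v. \<integral>\<^sup>+ w. g (1 - (1 - v) * w) \<partial>beta_measure (b + 1) a \<partial>beta_measure 1 b)"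
  proof (rule nn_integral_cong)
    fix v :: real
    have "(\<integral>\<^sup>+ w. g ((1 - v) * w + v) \<partial>beta_measure a (b + 1))
        = (\<integral>\<^sup>+ w. g ((1 - v) * (1 - w) + v) \<partial>beta_measure (b + 1) a)"
      by (rule nn_integral_beta_measure_reflect) measurable
    also have "\<dots> = (\<integral>\<^sup>+ w. g (1 - (1 - v) * w) \<partial>beta_measure (b + 1) a)"
      by (simp add: algebra_simps)
    finally show "(\<integral>\<^sup>+ w. g ((1 - v) * w + v) \<partial>beta_measure a (b + 1))
        = (\<integral>\<^sup>+ w. g (1 - (1 - v) * w) \<partial>beta_measure (b + 1) a)" .
  qed
  also have "\<dots> = (\<integral>\<^sup>+ v. \<integral>\<^sup>+ w. g (1 - v * w) \<partial>beta_measure (b + 1) a \<partial>beta_measure b 1)"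
    by (subst nn_integral_beta_measure_reflect) simp_all
  also have "\<dots> = (\<integral>\<^sup>+ w. \<integral>\<^sup>+ v. g (1 - v * w) \<partial>beta_measure b 1 \<partial>beta_measure (b + 1) a)"
    by (rule WV.Fubini') measurable
  also have "\<dots> = (\<integral>\<^sup>+ x. g (1 - x) \<partial>beta_measure b (a + 1))"
    using nn_integral_beta_measure_product[OF b a, of "\<lambda>x. g (1 - x)"] by simp
  also have "\<dots> = (\<integral>\<^sup>+ x. g x \<partial>beta_measure (a + 1) b)"
    by (simp add: nn_integral_beta_measure_reflect[of g "a + 1" b])
  finally show ?thesis .
qed

locale beta_recursion =
  fixes a b :: real
  assumes a_pos: "0 < a" and b_pos: "0 < b"
begin

lemma prob_space_noise: "prob_space (beta_measure a 1 \<Otimes>\<^sub>M beta_measure 1 b)"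
  using a_pos b_pos by (intro prob_space_pair prob_space_beta_measure) auto

lemma AE_noise_unit_interval:
  "AE p in beta_measure a 1 \<Otimes>\<^sub>M beta_measure 1 b. fst p \<in> {0<..<1} \<and> snd p \<in> {0<..<1}"
proof -
  interpret U: prob_space "beta_measure a 1" using a_pos by (simp add: prob_space_beta_measure)
  interpret V: prob_space "beta_measure 1 b" using b_pos by (simp add: prob_space_beta_measure)
  interpret UV: pair_sigma_finite "beta_measure a 1" "beta_measure 1 b" ..
  show ?thesis
  proof (rule UV.AE_pair_measure)
    show "AE u in beta_measure a 1. AE v in beta_measure 1 b. fst (u, v) \<in> {0<..<1} \<and> snd (u, v) \<in> {0<..<1}"
      using AE_beta_measure[of a 1]
    proof eventually_elim
      case (elim u)
      show ?case using AE_beta_measure[of 1 b] by eventually_elim (use elim in auto)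
    qed
  qed measurable
qed

end

sublocale beta_recursion \<subseteq> random_affine_map "beta_measure a 1 \<Otimes>\<^sub>M beta_measure 1 b" "\<lambda>p. fst p * (1 - snd p)" snd
proof (rule random_affine_map.intro[OF prob_space_noise], unfold_locales)
  show "AE p in beta_measure a 1 \<Otimes>\<^sub>M beta_measure 1 b.
      0 \<le> fst p * (1 - snd p) \<and> 0 \<le> snd p \<and> fst p * (1 - snd p) + snd p \<le> 1"
    using AE_noise_unit_interval
  proof (rule eventually_mono)
    fix p :: "real \<times> real"
    assume p: "fst p \<in> {0<..<1} \<and> snd p \<in> {0<..<1}"
    then have "fst p * (1 - snd p) \<le> 1 - snd p" and "0 \<le> fst p * (1 - snd p)" and "0 < snd p"
      by (auto intro: mult_left_le_one_le)
    then show "0 \<le> fst p * (1 - snd p) \<and> 0 \<le> snd p \<and> fst p * (1 - snd p) + snd p \<le> 1"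
      by (intro conjI; linarith)
  qed
qed measurable

context beta_recursion
begin

lemma mean_slope_eq: "mean_slope = a / (a + 1) * (b / (b + 1))"
proof -
  interpret V: prob_space "beta_measure 1 b" using b_pos by (simp add: prob_space_beta_measure)
  have "(\<integral>\<^sup>+ v. ennreal v \<partial>beta_measure b 1) = (\<integral>\<^sup>+ v. ennreal (1 - v) \<partial>beta_measure 1 b)"
    by (rule nn_integral_beta_measure_reflect) measurable
  then have mean_complement: "(\<integral>\<^sup>+ v. ennreal (1 - v) \<partial>beta_measure 1 b) = ennreal (b / (b + 1))"
    using nn_integral_beta_measure_mean[OF b_pos zero_less_one] by simp
  have "ennreal mean_slope = (\<integral>\<^sup>+ p. ennreal (fst p * (1 - snd p)) \<partial>(beta_measure a 1 \<Otimes>\<^sub>M beta_measure 1 b))"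
    unfolding mean_slope_def
    by (rule nn_integral_eq_integral[symmetric, OF integrable_A]) (rule eventually_mono[OF AE_coefficients], simp)
  also have "\<dots> = (\<integral>\<^sup>+ u. \<integral>\<^sup>+ v. ennreal (u * (1 - v)) \<partial>beta_measure 1 b \<partial>beta_measure a 1)"
    by (subst V.nn_integral_fst[symmetric]) auto
  also have "\<dots> = (\<integral>\<^sup>+ u. ennreal u * ennreal (b / (b + 1)) \<partial>beta_measure a 1)"
  proof (rule nn_integral_cong)
    fix u :: real
    have "(\<integral>\<^sup>+ v. ennreal (u * (1 - v)) \<partial>beta_measure 1 b) = (\<integral>\<^sup>+ v. ennreal u * ennreal (1 - v) \<partial>beta_measure 1 b)"
      by (rule nn_integral_cong_AE, rule eventually_mono[OF AE_beta_measure]) (simp add: ennreal_mult'')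
    also have "\<dots> = ennreal u * ennreal (b / (b + 1))"
      using mean_complement by (subst nn_integral_cmult) simp_all
    finally show "(\<integral>\<^sup>+ v. ennreal (u * (1 - v)) \<partial>beta_measure 1 b) = ennreal u * ennreal (b / (b + 1))" .
  qed
  also have "\<dots> = ennreal (a / (a + 1)) * ennreal (b / (b + 1))"
    by (subst nn_integral_multc) (simp_all add: nn_integral_beta_measure_mean a_pos)
  also have "\<dots> = ennreal (a / (a + 1) * (b / (b + 1)))"
    by (rule ennreal_mult[symmetric]) (use a_pos b_pos in auto)
  finally have "ennreal mean_slope = ennreal (a / (a + 1) * (b / (b + 1)))" .
  then show ?thesis
    using mean_slope_nonneg a_pos b_pos by simp
qed

lemma beta_measure_stationary: "beta_measure (a + 1) b \<bind> step = beta_measure (a + 1) b"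
proof -
  interpret V: prob_space "beta_measure 1 b" using b_pos by (simp add: prob_space_beta_measure)
  have \<pi>: "beta_measure (a + 1) b \<in> space (prob_algebra borel)"
    using a_pos b_pos by (intro beta_measure_in_prob_algebra) auto
  show ?thesis
  proof (rule measure_eqI)
    show sets_eq: "sets (beta_measure (a + 1) b \<bind> step) = sets (beta_measure (a + 1) b)"
      using sets_bind'[OF \<pi> measurable_step] by simp
    fix X assume "X \<in> sets (beta_measure (a + 1) b \<bind> step)"
    then have X[measurable]: "X \<in> sets borel" using sets_eq by simp
    have "emeasure (step z) X = (\<integral>\<^sup>+ u. \<integral>\<^sup>+ v. indicator X (u * (1 - v) * z + v) \<partial>beta_measure 1 b \<partial>beta_measure a 1)" for z
    proof -
      have "emeasure (step z) X = (\<integral>\<^sup>+ x. indicator X x \<partial>step z)"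
        by (simp add: step_def)
      also have "\<dots> = (\<integral>\<^sup>+ p. indicator X (fst p * (1 - snd p) * z + snd p) \<partial>(beta_measure a 1 \<Otimes>\<^sub>M beta_measure 1 b))"
        unfolding step_def by (rule nn_integral_distr) measurable
      also have "\<dots> = (\<integral>\<^sup>+ u. \<integral>\<^sup>+ v. indicator X (u * (1 - v) * z + v) \<partial>beta_measure 1 b \<partial>beta_measure a 1)"
        by (subst V.nn_integral_fst[symmetric]) auto
      finally show ?thesis .
    qed
    then have "emeasure (beta_measure (a + 1) b \<bind> step) X
        = (\<integral>\<^sup>+ z. \<integral>\<^sup>+ u. \<integral>\<^sup>+ v. indicator X (u * (1 - v) * z + v) \<partial>beta_measure 1 b \<partial>beta_measure a 1 \<partial>beta_measure (a + 1) b)"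
      by (simp add: emeasure_bind_prob_algebra[OF \<pi> measurable_step X])
    also have "\<dots> = emeasure (beta_measure (a + 1) b) X"
      using a_pos b_pos by (simp add: nn_integral_beta_measure_stationary)
    finally show "emeasure (beta_measure (a + 1) b \<bind> step) X = emeasure (beta_measure (a + 1) b) X" .
  qed
qed

end

lemma (in beta_recursion) chain_kernel_eq_funpow_bind_step:
  assumes "a = real N1" and "b = real N2"
  shows "chain_kernel N1 N2 t z = ((\<lambda>M. M \<bind> step) ^^ t) (return borel z)"
proof -
  have "chain_step N1 N2 = step"
  proof
    show "chain_step N1 N2 x = step x" for x
      unfolding chain_step_def step_def by (rule distr_cong) (auto simp: case_prod_beta assms)
  qed
  moreover have "return lborel z = return borel z"
    by (rule fun_cong[OF return_sets_cong]) simp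
  ultimately show ?thesis
    by (induction t) simp_all
qed

theorem mainTheorem2:
  fixes N1 N2 :: nat and z :: real and t :: nat
  assumes "N1 > 0" and "N2 > 0" and "z \<in> {0..1}"
  shows "\<bar>(\<integral>x. x \<partial>beta_measure (real N1 + 1) (real N2)) - z\<bar>
           \<le> enn2real (wasserstein1 (chain_kernel N1 N2 t z) (beta_measure (real N1 + 1) (real N2)))
              / ((real N1 / (real N1 + 1)) * (real N2 / (real N2 + 1))) ^ t
       \<and> enn2real (wasserstein1 (chain_kernel N1 N2 t z) (beta_measure (real N1 + 1) (real N2)))
              / ((real N1 / (real N1 + 1)) * (real N2 / (real N2 + 1))) ^ t
           \<le> (\<integral>x. \<bar>x - z\<bar> \<partial>beta_measure (real N1 + 1) (real N2))"
proof -
  interpret beta_recursion "real N1" "real N2"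
    using assms by unfold_locales auto
  have \<pi>: "beta_measure (real N1 + 1) (real N2) \<in> space (prob_algebra borel)"
    using assms by (intro beta_measure_in_prob_algebra) auto
  have "AE x in beta_measure (real N1 + 1) (real N2). x \<in> {0..1}"
    using AE_beta_measure by (rule eventually_mono) auto
  note bounds = wasserstein1_funpow_bind_step_bounds[OF \<pi> this beta_measure_stationary assms(3), of t]
  have "0 < ((real N1 / (real N1 + 1)) * (real N2 / (real N2 + 1))) ^ t"
    using assms by simp
  then show ?thesis
    using bounds unfolding mean_slope_eq chain_kernel_eq_funpow_bind_step[OF refl refl, symmetric]
    by (simp add: pos_le_divide_eq pos_divide_le_eq mult.commute)
qed

end
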